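(* Let $Q$ be a Moufang loop, $(c,f)$ a left pseudoautomorphism of $Q$, and $x\in Q$. Then $\big(x^{-1}f^{-1}(c^{-1}f(x)c),\ \mu_{f,x}\big)$ is a left pseudoautomorphism of $Q$, where $\mu_{f,x}=R_x^{-1}f^{-1}R_{f(x)}f$.
   Context: A loop is Moufang if it satisfies $xy\cdot zx=(x\cdot yz)x$ for all $x,y,z$. $L_x(y)=xy$, $R_x(y)=yx$. A pair $(c,f)$ with $c\in Q$ and $f$ a permutation of $Q$ is a (left) pseudoautomorphism of $Q$ if $cf(x)\cdot f(y)=cf(xy)$ for all $x,y\in Q$; $c$ is called a companion of $f$. *)

theory Defs
  imports Main
begin

definition loop :: "('a \<Rightarrow> 'a \<Rightarrow> 'a) \<Rightarrow> 'a \<Rightarrow> bool" where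
  "loop m e \<longleftrightarrow> (\<forall>x. m e x = x \<and> m x e = x)
     \<and> (\<forall>a b. \<exists>!x. m a x = b) \<and> (\<forall>a b. \<exists>!y. m y a = b)"

definition moufang_loop :: "('a \<Rightarrow> 'a \<Rightarrow> 'a) \<Rightarrow> 'a \<Rightarrow> bool" where
  "moufang_loop m e \<longleftrightarrow> loop m e
     \<and> (\<forall>x y z. m (m x y) (m z x) = m (m x (m y z)) x)"

definition L_mult :: "('a \<Rightarrow> 'a \<Rightarrow> 'a) \<Rightarrow> 'a \<Rightarrow> 'a \<Rightarrow> 'a" where
  "L_mult m x = (\<lambda>y. m x y)"

definition R_mult :: "('a \<Rightarrow> 'a \<Rightarrow> 'a) \<Rightarrow> 'a \<Rightarrow> 'a \<Rightarrow> 'a" where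
  "R_mult m x = (\<lambda>y. m y x)"

text \<open>The inverse x^{-1}: the unique y with x y = e (in a Moufang loop this is two-sided).\<close>
definition loop_inv :: "('a \<Rightarrow> 'a \<Rightarrow> 'a) \<Rightarrow> 'a \<Rightarrow> 'a \<Rightarrow> 'a" where
  "loop_inv m e x = (THE y. m x y = e)"

definition left_pseudoaut :: "('a \<Rightarrow> 'a \<Rightarrow> 'a) \<Rightarrow> 'a \<Rightarrow> ('a \<Rightarrow> 'a) \<Rightarrow> bool" where
  "left_pseudoaut m c f \<longleftrightarrow> bij f \<and> (\<forall>x y. m (m c (f x)) (f y) = m c (f (m x y)))"

end

theory Submission
  imports Defs
begin

text \<open>A left pseudoautomorphism (c,f) is the same thing as an autotopism
  (L_c f, f, L_c f). In a Moufang loop every (L_y, R_y, R_y L_y) is an autotopism, so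
  conjugating (L_c f, f, L_c f) by the Moufang autotopisms for x and for f(x) gives an
  autotopism (\<alpha>, \<mu>, \<gamma>) with \<mu> = R_x^{-1} f^{-1} R_{f(x)} f. Since \<mu>(e) = e, evaluating
  at e shows \<alpha> = \<gamma> = L_{\<alpha>(e)} \<mu>, i.e. (\<alpha>(e), \<mu>) is a left pseudoautomorphism, and
  \<alpha>(e) = x^{-1} f^{-1}(c^{-1}(f(x) c)) = x^{-1} f^{-1}(c^{-1} f(x) \<cdot> c) by the left inverse
  property and flexibility.\<close>

definition autotopism ::
    "('a \<Rightarrow> 'a \<Rightarrow> 'a) \<Rightarrow> ('a \<Rightarrow> 'a) \<Rightarrow> ('a \<Rightarrow> 'a) \<Rightarrow> ('a \<Rightarrow> 'a) \<Rightarrow> bool" where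
  "autotopism m \<alpha> \<beta> \<gamma> \<longleftrightarrow> bij \<alpha> \<and> bij \<beta> \<and> bij \<gamma> \<and> (\<forall>a b. m (\<alpha> a) (\<beta> b) = \<gamma> (m a b))"

lemma autotopism_comp:
  assumes "autotopism m \<alpha> \<beta> \<gamma>" "autotopism m \<alpha>' \<beta>' \<gamma>'"
  shows "autotopism m (\<alpha> \<circ> \<alpha>') (\<beta> \<circ> \<beta>') (\<gamma> \<circ> \<gamma>')"
  using assms unfolding autotopism_def by (auto intro: bij_comp)

lemma autotopism_inv:
  assumes "autotopism m \<alpha> \<beta> \<gamma>"
  shows "autotopism m (inv \<alpha>) (inv \<beta>) (inv \<gamma>)"
proof -
  have bij: "bij \<alpha>" "bij \<beta>" "bij \<gamma>" and hom: "\<And>a b. m (\<alpha> a) (\<beta> b) = \<gamma> (m a b)"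
    using assms unfolding autotopism_def by auto
  have "m (inv \<alpha> a) (inv \<beta> b) = inv \<gamma> (m a b)" for a b
  proof -
    have "\<gamma> (m (inv \<alpha> a) (inv \<beta> b)) = m a b"
      using hom[of "inv \<alpha> a" "inv \<beta> b"] bij by (simp add: bij_is_surj surj_f_inv_f)
    then show ?thesis using bij(3) by (metis bij_inv_eq_iff)
  qed
  then show ?thesis using bij unfolding autotopism_def by (simp add: bij_imp_bij_inv)
qed

locale loop_mult =
  fixes m :: "'a \<Rightarrow> 'a \<Rightarrow> 'a" and e :: 'a
  assumes loop: "loop m e"
begin

lemma mult_left_unit [simp]: "m e x = x" and mult_right_unit [simp]: "m x e = x"
  using loop unfolding loop_def by auto

lemma mult_left_cancel:
  assumes "m a x = m a y"
  shows "x = y"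
proof -
  have "\<exists>!z. m a z = m a y" using loop unfolding loop_def by blast
  with assms show ?thesis by blast
qed

lemma mult_right_cancel:
  assumes "m x a = m y a"
  shows "x = y"
proof -
  have "\<exists>!z. m z a = m y a" using loop unfolding loop_def by blast
  with assms show ?thesis by blast
qed

lemma bij_L_mult: "bij (m a)"
proof (rule bijI)
  show "inj (m a)" by (rule injI) (rule mult_left_cancel)
  have "\<forall>b. \<exists>x. m a x = b" using loop unfolding loop_def by blast
  then show "surj (m a)" by (metis surj_def)
qed

lemma bij_R_mult: "bij (R_mult m a)"
proof (rule bijI)
  show "inj (R_mult m a)" unfolding R_mult_def by (rule injI) (rule mult_right_cancel)
  have "\<forall>b. \<exists>x. m x a = b" using loop unfolding loop_def by blast
  then show "surj (R_mult m a)" unfolding R_mult_def by (metis surj_def)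
qed

lemma left_pseudoaut_unit:
  assumes "left_pseudoaut m c f"
  shows "f e = e"
proof -
  have "bij f" and pseudo: "\<And>y. m (m c (f e)) (f y) = m c (f (m e y))"
    using assms unfolding left_pseudoaut_def by auto
  then obtain y where "f y = e" by (metis bij_is_surj surjD)
  with pseudo[of y] have "m c (f e) = m c e" by simp
  then show ?thesis by (rule mult_left_cancel)
qed

lemma autotopism_of_left_pseudoaut:
  assumes "left_pseudoaut m c f"
  shows "autotopism m (m c \<circ> f) f (m c \<circ> f)"
  using assms bij_L_mult unfolding left_pseudoaut_def autotopism_def by (auto intro: bij_comp)

lemma R_conj_left_pseudoaut_unit:
  assumes "left_pseudoaut m c f"
  shows "(inv (R_mult m x) \<circ> inv f \<circ> R_mult m (f x) \<circ> f) e = e"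
proof -
  have "bij f" using assms unfolding left_pseudoaut_def by blast
  moreover have "inv (R_mult m x) x = e"
    using bij_R_mult[of x] by (metis R_mult_def bij_inv_eq_iff mult_left_unit)
  ultimately show ?thesis
    by (simp add: left_pseudoaut_unit[OF assms] R_mult_def bij_is_inj)
qed

lemma left_pseudoaut_of_autotopism:
  assumes "autotopism m \<alpha> \<beta> \<gamma>" and "\<beta> e = e"
  shows "left_pseudoaut m (\<alpha> e) \<beta>"
proof -
  have hom: "\<And>a b. m (\<alpha> a) (\<beta> b) = \<gamma> (m a b)" and "bij \<beta>"
    using assms(1) unfolding autotopism_def by auto
  have \<gamma>_eq: "\<gamma> b = m (\<alpha> e) (\<beta> b)" for b
    using hom[of e b] by simp
  have \<alpha>_eq: "\<alpha> a = \<gamma> a" for a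
    using hom[of a e] assms(2) by simp
  have "m (m (\<alpha> e) (\<beta> a)) (\<beta> b) = m (\<alpha> e) (\<beta> (m a b))" for a b
  proof -
    have "m (m (\<alpha> e) (\<beta> a)) (\<beta> b) = m (\<alpha> a) (\<beta> b)"
      using \<alpha>_eq[of a] \<gamma>_eq[of a] by simp
    also have "\<dots> = \<gamma> (m a b)" by (rule hom)
    finally show ?thesis using \<gamma>_eq[of "m a b"] by simp
  qed
  with \<open>bij \<beta>\<close> show ?thesis unfolding left_pseudoaut_def by blast
qed

end

locale moufang_mult = loop_mult +
  assumes moufang: "m (m x y) (m z x) = m (m x (m y z)) x"
begin

lemma mult_right_inverse: "m x (loop_inv m e x) = e"
proof -
  have "\<exists>!y. m x y = e" using loop unfolding loop_def by auto
  then show ?thesis unfolding loop_inv_def by (rule theI')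
qed

lemma mult_inverse_left_cancel: "m x (m (loop_inv m e x) z) = z"
proof -
  have "m (m x (loop_inv m e x)) (m z x) = m (m x (m (loop_inv m e x) z)) x"
    by (rule moufang)
  then have "m z x = m (m x (m (loop_inv m e x) z)) x"
    by (simp add: mult_right_inverse)
  then show ?thesis using mult_right_cancel by metis
qed

lemma left_inverse_property: "m (loop_inv m e x) (m x y) = y"
  using mult_inverse_left_cancel[of x "m x y"] mult_left_cancel by metis

lemma inv_L_mult: "inv (m x) = m (loop_inv m e x)"
proof
  fix w
  show "inv (m x) w = m (loop_inv m e x) w"
    using bij_L_mult[of x] mult_inverse_left_cancel[of x w] by (metis bij_inv_eq_iff)
qed

lemma flexible: "m x (m z x) = m (m x z) x"
  using moufang[of x e z] by simp

lemma inverse_mult_assoc: "m (m (loop_inv m e c) a) c = m (loop_inv m e c) (m a c)"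
proof -
  define b where "b = m (loop_inv m e c) a"
  have "a = m c b"
    unfolding b_def by (simp add: mult_inverse_left_cancel)
  then have "m (loop_inv m e c) (m a c) = m (loop_inv m e c) (m c (m b c))"
    by (simp add: flexible)
  also have "\<dots> = m b c" by (rule left_inverse_property)
  finally show ?thesis unfolding b_def by simp
qed

lemma autotopism_moufang: "autotopism m (m y) (R_mult m y) (R_mult m y \<circ> m y)"
  using bij_L_mult[of y] bij_R_mult[of y]
  unfolding autotopism_def by (simp add: bij_comp R_mult_def moufang)

lemma autotopism_conj_left_pseudoaut:
  assumes "left_pseudoaut m c f"
  shows "autotopism m (inv (m x) \<circ> inv (m c \<circ> f) \<circ> m (f x) \<circ> (m c \<circ> f))
           (inv (R_mult m x) \<circ> inv f \<circ> R_mult m (f x) \<circ> f)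
           (inv (R_mult m x \<circ> m x) \<circ> inv (m c \<circ> f) \<circ> (R_mult m (f x) \<circ> m (f x)) \<circ> (m c \<circ> f))"
proof -
  have pseudo: "autotopism m (m c \<circ> f) f (m c \<circ> f)"
    using assms by (rule autotopism_of_left_pseudoaut)
  show ?thesis
    by (rule autotopism_comp[OF autotopism_comp[OF autotopism_comp[OF
          autotopism_inv[OF autotopism_moufang] autotopism_inv[OF pseudo]]
          autotopism_moufang] pseudo])
qed

lemma conj_left_pseudoaut_companion:
  assumes "left_pseudoaut m c f"
  shows "(inv (m x) \<circ> inv (m c \<circ> f) \<circ> m (f x) \<circ> (m c \<circ> f)) e
           = m (loop_inv m e x) (inv f (m (m (loop_inv m e c) (f x)) c))"
proof -
  have "bij f" using assms unfolding left_pseudoaut_def by blast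
  then have "inv (m c \<circ> f) = inv f \<circ> m (loop_inv m e c)"
    using bij_L_mult[of c] by (simp add: o_inv_distrib inv_L_mult)
  then show ?thesis
    by (simp add: left_pseudoaut_unit[OF assms] inv_L_mult inverse_mult_assoc)
qed

end

lemma moufang_mult_if_moufang_loop: "moufang_loop m e \<Longrightarrow> moufang_mult m e"
  unfolding moufang_loop_def moufang_mult_def moufang_mult_axioms_def loop_mult_def by blast

theorem mainTheorem11:
  fixes m :: "'a \<Rightarrow> 'a \<Rightarrow> 'a" and e c x :: 'a and f :: "'a \<Rightarrow> 'a"
  assumes "moufang_loop m e"
    and "left_pseudoaut m c f"
  shows "left_pseudoaut m
           (m (loop_inv m e x) (inv f (m (m (loop_inv m e c) (f x)) c)))
           (inv (R_mult m x) \<circ> inv f \<circ> R_mult m (f x) \<circ> f)"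
proof -
  interpret moufang_mult m e
    using assms(1) by (rule moufang_mult_if_moufang_loop)
  show ?thesis
    using left_pseudoaut_of_autotopism[OF autotopism_conj_left_pseudoaut[OF assms(2)]
        R_conj_left_pseudoaut_unit[OF assms(2)]]
    unfolding conj_left_pseudoaut_companion[OF assms(2)] .
qed

end
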